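(* Let $G$ be a group and $L,N$ normal subgroups with $L\geqslant N$ and $N\geqslant[G,L]$. For $\nu\in\mathrm{Q}(N)^G$ the following are equivalent: (1) $\nu$ is extendable to $L$, i.e. $\nu=\psi|_N$ for some $\psi\in\mathrm{Q}(L)^G$; (2) $\mathscr{D}^t_{G,L}(\nu)<\infty$ for every $t\in\mathbb{N}$; (3) $\mathscr{D}^t_{G,L}(\nu)<\infty$ for some $t\in\mathbb{N}$; (4) $\mathscr{D}^1_{G,L}(\nu)=\mathscr{D}(\nu)$; (5) $\mathscr{D}^1_{G,L}(\nu)<\infty$.
   Context: $[g,h]=ghg^{-1}h^{-1}$. $\mathscr{D}(\nu)=\sup_{x_1,x_2\in N}|\nu(x_1x_2)-\nu(x_1)-\nu(x_2)|$. $\mathrm{Q}(N)^G$ (resp. $\mathrm{Q}(L)^G$): homogeneous quasimorphisms on $N$ (resp. $L$) invariant under conjugation by $G$. For $t\in\mathbb{N}$, $\mathscr{D}^t_{G,L}(\nu)=\sup\{|\nu([g_1,g_1']\cdots[g_t,g_t'])|: g_1,\dots,g_t\in G,\ g_1',\dots,g_t'\in L\}\in[0,\infty]$ (these products lie in $N$ since $N\geqslant[G,L]$). *)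

theory Defs
  imports Complex_Main "HOL-Algebra.Group" "HOL-Algebra.Coset" "HOL-Library.Extended_Real"
begin

definition commut :: "('a, 'b) monoid_scheme \<Rightarrow> 'a \<Rightarrow> 'a \<Rightarrow> 'a" where
  "commut G g h = g \<otimes>\<^bsub>G\<^esub> h \<otimes>\<^bsub>G\<^esub> inv\<^bsub>G\<^esub> g \<otimes>\<^bsub>G\<^esub> inv\<^bsub>G\<^esub> h"

definition defect :: "('a, 'b) monoid_scheme \<Rightarrow> 'a set \<Rightarrow> ('a \<Rightarrow> real) \<Rightarrow> ereal" where
  "defect G H \<nu> = (SUP p \<in> H \<times> H.
      ereal \<bar>\<nu> (fst p \<otimes>\<^bsub>G\<^esub> snd p) - \<nu> (fst p) - \<nu> (snd p)\<bar>)"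

definition hqm :: "('a, 'b) monoid_scheme \<Rightarrow> 'a set \<Rightarrow> ('a \<Rightarrow> real) \<Rightarrow> bool" where
  "hqm G H \<nu> \<longleftrightarrow> defect G H \<nu> < \<infinity> \<and>
      (\<forall>x\<in>H. \<forall>n::int. \<nu> (x [^]\<^bsub>G\<^esub> n) = of_int n * \<nu> x)"

definition hqm_inv :: "('a, 'b) monoid_scheme \<Rightarrow> 'a set \<Rightarrow> ('a \<Rightarrow> real) \<Rightarrow> bool" where
  "hqm_inv G H \<nu> \<longleftrightarrow> hqm G H \<nu> \<and>
      (\<forall>g\<in>carrier G. \<forall>x\<in>H. \<nu> (g \<otimes>\<^bsub>G\<^esub> x \<otimes>\<^bsub>G\<^esub> inv\<^bsub>G\<^esub> g) = \<nu> x)"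

fun comm_prod :: "('a, 'b) monoid_scheme \<Rightarrow> (nat \<Rightarrow> 'a) \<Rightarrow> (nat \<Rightarrow> 'a) \<Rightarrow> nat \<Rightarrow> 'a" where
  "comm_prod G g l 0 = \<one>\<^bsub>G\<^esub>"
| "comm_prod G g l (Suc n) = comm_prod G g l n \<otimes>\<^bsub>G\<^esub> commut G (g n) (l n)"

definition Dt :: "('a, 'b) monoid_scheme \<Rightarrow> 'a set \<Rightarrow> nat \<Rightarrow> ('a \<Rightarrow> real) \<Rightarrow> ereal" where
  "Dt G L t \<nu> = Sup {ereal \<bar>\<nu> (comm_prod G g l t)\<bar> | g l.
      (\<forall>i<t. g i \<in> carrier G) \<and> (\<forall>i<t. l i \<in> L)}"

end

theory Submission
  imports Defs "HOL-Algebra.Generated_Groups"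
begin

text \<open>
  If \<psi> extends \<nu>, each mixed commutator [g, l] has |\<psi> [g, l]| \<le> D(\<psi>), so a product of t of them
  is bounded. Conversely, because L/N is central in G/N, [g, l^n] is a product of n G-conjugates of
  [g, l], whence D^1(\<nu>) \<le> D(\<nu>) once D^1(\<nu>) is finite; and Bavard's estimate (the defect of a
  homogeneous conjugation-invariant quasimorphism is at most the supremum of its values on commutators)
  gives D(\<nu>) \<le> D^1(\<nu>). For the extension, let C = D^1(\<nu>) and take, by Zorn's lemma, a maximal
  homogeneous G-invariant extension \<psi> of \<nu> with defect at most C to a subgroup N \<le> M \<le> L. If some x \<in> L
  lies outside M, then m x^j \<mapsto> \<psi> m + j \<cdot> slope is, up to a bounded error, a quasimorphism on M\<langle>x\<rangle>;
  its homogenization is G-invariant and agrees with \<nu> on commutators, which lie in N, so by Bavard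
  its defect is again at most C, contradicting maximality.
\<close>

lemma le_if_linear_bound:
  fixes a b c :: real
  assumes "\<And>n::nat. real n * a \<le> real n * b + c"
  shows "a \<le> b"
proof (rule ccontr)
  assume "\<not> a \<le> b"
  then have pos: "a - b > 0" by simp
  obtain n :: nat where "real n > c / (a - b)" using reals_Archimedean2 by blast
  then have "real n * (a - b) > c" using pos by (simp add: field_simps)
  then show False using assms[of n] by (simp add: algebra_simps)
qed

lemma convergent_if_dist_Suc_le_pow2:
  fixes s :: "nat \<Rightarrow> real"
  assumes "\<And>k. \<bar>s (Suc k) - s k\<bar> \<le> c / 2 ^ k"
  shows "convergent s"
proof -
  have "summable (\<lambda>k. c * (1/2) ^ k)" by (intro summable_mult summable_geometric) simp
  then have "summable (\<lambda>k. s (Suc k) - s k)"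
    by (rule summable_comparison_test'[where N=0]) (use assms in \<open>simp add: power_divide\<close>)
  then have "(\<lambda>n. \<Sum>k<n. s (Suc k) - s k) \<longlonglongrightarrow> (\<Sum>k. s (Suc k) - s k)"
    by (rule summable_LIMSEQ)
  then have "convergent (\<lambda>n. s 0 + (\<Sum>k<n. s (Suc k) - s k))"
    by (intro convergent_add convergent_const convergentI)
  then show ?thesis by (simp add: sum_lessThan_telescope)
qed

lemma Lim_transform_pow2_bound:
  fixes a b :: "nat \<Rightarrow> real"
  assumes "a \<longlonglongrightarrow> A" and "\<And>k. \<bar>b k - a k\<bar> \<le> c / 2 ^ k"
  shows "b \<longlonglongrightarrow> A"
proof (rule Lim_transform[OF assms(1)])
  have null: "(\<lambda>k. \<bar>c\<bar> / 2 ^ k) \<longlonglongrightarrow> 0" by (rule LIMSEQ_divide_realpow_zero) simp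
  show "(\<lambda>k. b k - a k) \<longlonglongrightarrow> 0"
  proof (rule tendsto_0_le[OF null, where K=1], rule always_eventually, rule allI)
    fix k
    have "c / 2 ^ k \<le> \<bar>c\<bar> / 2 ^ k" by (rule divide_right_mono) auto
    then show "norm (b k - a k) \<le> norm (\<bar>c\<bar> / 2 ^ k) * 1" using assms(2)[of k] by simp
  qed
qed

lemma divide_pow2_bound:
  fixes u v p B :: real
  assumes "\<bar>u - p * v\<bar> \<le> B"
  shows "\<bar>u / 2 ^ k - p * (v / 2 ^ k)\<bar> \<le> B / 2 ^ k"
proof -
  have "u / 2 ^ k - p * (v / 2 ^ k) = (u - p * v) / 2 ^ k" by (simp add: diff_divide_distrib)
  then show ?thesis using assms by (simp add: abs_divide divide_right_mono)
qed

lemma defect_le_iff: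
  "defect G H \<phi> \<le> ereal c \<longleftrightarrow> (\<forall>x\<in>H. \<forall>y\<in>H. \<bar>\<phi> (x \<otimes>\<^bsub>G\<^esub> y) - \<phi> x - \<phi> y\<bar> \<le> c)"
  unfolding defect_def by (auto simp: SUP_le_iff)

lemma defect_ge:
  "x \<in> H \<Longrightarrow> y \<in> H \<Longrightarrow> ereal \<bar>\<phi> (x \<otimes>\<^bsub>G\<^esub> y) - \<phi> x - \<phi> y\<bar> \<le> defect G H \<phi>"
  unfolding defect_def by (intro SUP_upper2[of "(x, y)"]) auto

lemma defect_finite_bound:
  assumes "defect G H \<phi> < \<infinity>" and "x \<in> H" and "y \<in> H"
  shows "\<bar>\<phi> (x \<otimes>\<^bsub>G\<^esub> y) - \<phi> x - \<phi> y\<bar> \<le> real_of_ereal (defect G H \<phi>)"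
proof -
  have "ereal \<bar>\<phi> (x \<otimes>\<^bsub>G\<^esub> y) - \<phi> x - \<phi> y\<bar> \<le> defect G H \<phi>"
    by (rule defect_ge) (use assms in auto)
  then show ?thesis using assms(1) by (cases "defect G H \<phi>") auto
qed

context group begin

lemma inv_mult_cancel_left [simp]: "a \<in> carrier G \<Longrightarrow> b \<in> carrier G \<Longrightarrow> inv a \<otimes> (a \<otimes> b) = b"
  by (simp add: m_assoc[symmetric])

lemma mult_inv_cancel_left [simp]: "a \<in> carrier G \<Longrightarrow> b \<in> carrier G \<Longrightarrow> a \<otimes> (inv a \<otimes> b) = b"
  by (simp add: m_assoc[symmetric])

lemma commut_closed [simp]: "g \<in> carrier G \<Longrightarrow> h \<in> carrier G \<Longrightarrow> commut G g h \<in> carrier G"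
  unfolding commut_def by simp

lemma conj_eq_commut_mult: "g \<in> carrier G \<Longrightarrow> h \<in> carrier G \<Longrightarrow> g \<otimes> h \<otimes> inv g = commut G g h \<otimes> h"
  unfolding commut_def by (simp add: m_assoc)

lemma conj_nat_pow:
  "g \<in> carrier G \<Longrightarrow> x \<in> carrier G \<Longrightarrow> (g \<otimes> x \<otimes> inv g) [^] (n::nat) = g \<otimes> x [^] n \<otimes> inv g"
  by (induction n) (simp_all add: m_assoc)

lemma commut_pow_Suc:
  "g \<in> carrier G \<Longrightarrow> l \<in> carrier G \<Longrightarrow>
    commut G g (l [^] Suc n) = commut G g (l [^] n) \<otimes> (l [^] n \<otimes> commut G g l \<otimes> inv (l [^] n))"
  unfolding commut_def by (simp add: m_assoc inv_mult_group)

lemma pow_mult_pow_mult_inv_add_two: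
  assumes x: "x \<in> carrier G" and y: "y \<in> carrier G"
  shows "x [^] (n + 2::nat) \<otimes> y [^] (n + 2::nat) \<otimes> inv ((x \<otimes> y) [^] (n + 2::nat)) =
    (x [^] n \<otimes> commut G (x [^] (2::nat) \<otimes> y) (y [^] n \<otimes> inv x) \<otimes> inv (x [^] n)) \<otimes>
    (x [^] n \<otimes> y [^] n \<otimes> inv ((x \<otimes> y) [^] n))"
proof -
  have "x [^] (n + 2::nat) = x [^] n \<otimes> (x \<otimes> x)" "x [^] (2::nat) = x \<otimes> x"
    "(x \<otimes> y) [^] (n + 2::nat) = (x \<otimes> y) [^] n \<otimes> (x \<otimes> y \<otimes> (x \<otimes> y))"
    using x y by (simp_all add: m_assoc numeral_2_eq_2)
  moreover have "y [^] (n + 2::nat) = y \<otimes> (y [^] n \<otimes> y)"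
    using y by (metis add_2_eq_Suc' nat_pow_Suc nat_pow_Suc2)
  ultimately show ?thesis unfolding commut_def using x y by (simp add: m_assoc inv_mult_group)
qed

lemma comm_prod_closed:
  assumes "subgroup H G" and "\<And>i. i < k \<Longrightarrow> commut G (g i) (l i) \<in> H"
  shows "comm_prod G g l k \<in> H"
  using assms(2) by (induction k) (auto intro: subgroup.one_closed[OF assms(1)] subgroup.m_closed[OF assms(1)])

lemma comm_prod_single:
  assumes "a \<in> carrier G" and "b \<in> carrier G"
  shows "comm_prod G (\<lambda>i. if i = 0 then a else \<one>) (\<lambda>i. if i = 0 then b else \<one>) (Suc k) = commut G a b"
  using assms by (induction k) (simp_all add: commut_def)

lemma subgroup_Union_chain:
  assumes "\<C> \<noteq> {}" and "\<And>H. H \<in> \<C> \<Longrightarrow> subgroup H G"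
    and chain: "\<And>H K. H \<in> \<C> \<Longrightarrow> K \<in> \<C> \<Longrightarrow> H \<subseteq> K \<or> K \<subseteq> H"
  shows "subgroup (\<Union>\<C>) G"
proof (rule subgroupI)
  show "\<Union>\<C> \<subseteq> carrier G" using assms(2) subgroup.subset by blast
  obtain H where "H \<in> \<C>" using assms(1) by blast
  then show "\<Union>\<C> \<noteq> {}" using subgroup.one_closed[OF assms(2)] by blast
  show "inv a \<in> \<Union>\<C>" if a: "a \<in> \<Union>\<C>" for a
  proof -
    obtain H where "H \<in> \<C>" "a \<in> H" using a by blast
    then show ?thesis using subgroup.m_inv_closed[OF assms(2)] by blast
  qed
  show "a \<otimes> b \<in> \<Union>\<C>" if ab: "a \<in> \<Union>\<C>" "b \<in> \<Union>\<C>" for a b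
  proof -
    obtain H K where HK: "H \<in> \<C>" "K \<in> \<C>" "a \<in> H" "b \<in> K" using ab by blast
    then consider "a \<in> K" "b \<in> K" | "a \<in> H" "b \<in> H" using chain[of H K] by blast
    then show ?thesis using HK subgroup.m_closed[OF assms(2)] by cases blast+
  qed
qed

end

definition graph_fun :: "('a \<times> 'b) set \<Rightarrow> 'a \<Rightarrow> 'b" where
  "graph_fun R y = (THE r. (y, r) \<in> R)"

lemma graph_fun_eq: "single_valued R \<Longrightarrow> (y, r) \<in> R \<Longrightarrow> graph_fun R y = r"
  unfolding graph_fun_def by (rule the_equality) (auto dest: single_valuedD)

lemma graph_fun_in: "single_valued R \<Longrightarrow> y \<in> Domain R \<Longrightarrow> (y, graph_fun R y) \<in> R"
  using graph_fun_eq by fastforce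

lemma graph_fun_graph: "y \<in> M \<Longrightarrow> graph_fun ((\<lambda>y. (y, f y)) ` M) y = f y"
  by (rule graph_fun_eq) (auto simp: single_valued_def)

lemma single_valued_Union_chain:
  assumes "\<And>R. R \<in> \<C> \<Longrightarrow> single_valued R" and "\<And>R S. R \<in> \<C> \<Longrightarrow> S \<in> \<C> \<Longrightarrow> R \<subseteq> S \<or> S \<subseteq> R"
  shows "single_valued (\<Union>\<C>)"
proof (rule single_valuedI)
  fix y r r' assume "(y, r) \<in> \<Union>\<C>" "(y, r') \<in> \<Union>\<C>"
  then obtain R S where "R \<in> \<C>" "S \<in> \<C>" "(y, r) \<in> R" "(y, r') \<in> S" by blast
  then show "r = r'" using assms by (metis single_valuedD subsetD)
qed

lemma graph_fun_Union_chain: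
  assumes "\<And>R. R \<in> \<C> \<Longrightarrow> single_valued R" and "\<And>R S. R \<in> \<C> \<Longrightarrow> S \<in> \<C> \<Longrightarrow> R \<subseteq> S \<or> S \<subseteq> R"
    and "R \<in> \<C>" and "y \<in> Domain R"
  shows "graph_fun (\<Union>\<C>) y = graph_fun R y"
proof -
  have "single_valued (\<Union>\<C>)" by (rule single_valued_Union_chain) (use assms(1,2) in blast)+
  moreover have "(y, graph_fun R y) \<in> \<Union>\<C>"
    using graph_fun_in[OF assms(1)[OF assms(3)] assms(4)] assms(3) by blast
  ultimately show ?thesis by (rule graph_fun_eq)
qed

lemma Domain_Union_chain_common:
  assumes "\<And>R S. R \<in> \<C> \<Longrightarrow> S \<in> \<C> \<Longrightarrow> R \<subseteq> S \<or> S \<subseteq> R"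
    and "a \<in> Domain (\<Union>\<C>)" and "b \<in> Domain (\<Union>\<C>)"
  shows "\<exists>R\<in>\<C>. a \<in> Domain R \<and> b \<in> Domain R"
proof -
  obtain R S where "R \<in> \<C>" "S \<in> \<C>" "a \<in> Domain R" "b \<in> Domain S" using assms(2,3) by blast
  then show ?thesis using assms(1)[of R S] by (metis Domain_mono subsetD)
qed

section \<open>Homogenization of quasimorphisms\<close>

locale quasimorphism_on = group G for G (structure) +
  fixes H :: "'a set" and f :: "'a \<Rightarrow> real" and K :: real
  assumes subgroup_H: "subgroup H G"
    and defect_le: "x \<in> H \<Longrightarrow> y \<in> H \<Longrightarrow> \<bar>f (x \<otimes> y) - f x - f y\<bar> \<le> K"
begin

sublocale H: subgroup H G by (rule subgroup_H)

lemma H_nat_pow_closed [simp]: "x \<in> H \<Longrightarrow> x [^] (n::nat) \<in> H"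
  by (induction n) auto

lemma H_commut_closed [simp]: "a \<in> H \<Longrightarrow> b \<in> H \<Longrightarrow> commut G a b \<in> H"
  unfolding commut_def by simp

lemma abs_f_one_le: "\<bar>f \<one>\<bar> \<le> K"
  using defect_le[of \<one> \<one>] by simp

lemma f_nat_pow_close: "x \<in> H \<Longrightarrow> \<bar>f (x [^] n) - real n * f x\<bar> \<le> (real n + 1) * K"
proof (induction n)
  case 0
  then show ?case using abs_f_one_le by simp
next
  case (Suc n)
  have "\<bar>f (x [^] n \<otimes> x) - f (x [^] n) - f x\<bar> \<le> K" using Suc.prems by (simp add: defect_le)
  then show ?case using Suc by (simp add: algebra_simps)
qed

lemma f_inv_close: "x \<in> H \<Longrightarrow> \<bar>f (inv x) + f x\<bar> \<le> 2 * K"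
  using defect_le[of "inv x" x] abs_f_one_le by simp

definition homogenization :: "'a \<Rightarrow> real" where
  "homogenization x = lim (\<lambda>k. f (x [^] (2 ^ k :: nat)) / 2 ^ k)"

lemma dyadic_quotient_Suc:
  assumes x: "x \<in> H"
  shows "\<bar>f (x [^] (2 ^ Suc k :: nat)) / 2 ^ Suc k - f (x [^] (2 ^ k :: nat)) / 2 ^ k\<bar> \<le> K / 2 ^ Suc k"
proof -
  define y where "y = x [^] (2 ^ k :: nat)"
  have y: "y \<in> H" unfolding y_def using x by simp
  have "x [^] (2 ^ Suc k :: nat) = y \<otimes> y" unfolding y_def using x by (simp add: nat_pow_mult mult_2)
  then have "\<bar>f (x [^] (2 ^ Suc k :: nat)) - 2 * f y\<bar> / 2 ^ Suc k \<le> K / 2 ^ Suc k"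
    using defect_le[OF y y] by (intro divide_right_mono) auto
  then show ?thesis unfolding y_def by (simp add: field_simps abs_divide)
qed

lemma homogenization_LIMSEQ:
  "x \<in> H \<Longrightarrow> (\<lambda>k. f (x [^] (2 ^ k :: nat)) / 2 ^ k) \<longlonglongrightarrow> homogenization x"
  unfolding homogenization_def convergent_LIMSEQ_iff[symmetric]
  by (rule convergent_if_dist_Suc_le_pow2[where c="K / 2"]) (use dyadic_quotient_Suc in auto)

lemma dyadic_quotient_close: "x \<in> H \<Longrightarrow> \<bar>f (x [^] (2 ^ k :: nat)) / 2 ^ k - f x\<bar> \<le> K - K / 2 ^ k"
proof (induction k)
  case 0
  then show ?case by simp
next
  case (Suc k)
  have "K - K / 2 ^ k + K / 2 ^ Suc k = K - K / 2 ^ Suc k" by (simp add: field_simps)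
  then show ?case using Suc dyadic_quotient_Suc[OF Suc.prems, of k] by linarith
qed

lemma homogenization_close: "x \<in> H \<Longrightarrow> \<bar>homogenization x - f x\<bar> \<le> K"
proof -
  assume x: "x \<in> H"
  have "(\<lambda>k. \<bar>f (x [^] (2 ^ k :: nat)) / 2 ^ k - f x\<bar>) \<longlonglongrightarrow> \<bar>homogenization x - f x\<bar>"
    by (intro tendsto_intros homogenization_LIMSEQ x)
  moreover have "\<bar>f (x [^] (2 ^ k :: nat)) / 2 ^ k - f x\<bar> \<le> K" for k
    using dyadic_quotient_close[OF x, of k] abs_f_one_le by (smt (verit) divide_nonneg_pos zero_less_power)
  ultimately show ?thesis by (intro LIMSEQ_le_const2) auto
qed

lemma homogenization_defect:
  "x \<in> H \<Longrightarrow> y \<in> H \<Longrightarrow> \<bar>homogenization (x \<otimes> y) - homogenization x - homogenization y\<bar> \<le> 4 * K"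
  using homogenization_close[of x] homogenization_close[of y] homogenization_close[of "x \<otimes> y"]
    defect_le[of x y] by simp

lemma homogenization_nat_pow:
  assumes x: "x \<in> H"
  shows "homogenization (x [^] (p::nat)) = real p * homogenization x"
proof -
  have "\<bar>f ((x [^] p) [^] (2 ^ k :: nat)) / 2 ^ k - real p * (f (x [^] (2 ^ k :: nat)) / 2 ^ k)\<bar>
      \<le> (real p + 1) * K / 2 ^ k" for k
  proof -
    have e: "(x [^] p) [^] (2 ^ k :: nat) = (x [^] (2 ^ k :: nat)) [^] p"
      using x by (simp add: nat_pow_pow mult.commute)
    have "\<bar>f ((x [^] (2 ^ k :: nat)) [^] p) - real p * f (x [^] (2 ^ k :: nat))\<bar> \<le> (real p + 1) * K"
      using f_nat_pow_close x by simp
    then show ?thesis unfolding e by (rule divide_pow2_bound)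
  qed
  then have "(\<lambda>k. f ((x [^] p) [^] (2 ^ k :: nat)) / 2 ^ k) \<longlonglongrightarrow> real p * homogenization x"
    by (intro Lim_transform_pow2_bound[OF tendsto_mult_left[OF homogenization_LIMSEQ[OF x]]])
  then show ?thesis using homogenization_LIMSEQ[of "x [^] p"] x LIMSEQ_unique by auto
qed

lemma homogenization_pow_close: "x \<in> H \<Longrightarrow> \<bar>f (x [^] (n::nat)) - real n * homogenization x\<bar> \<le> K"
  using homogenization_close[of "x [^] n"] by (simp add: homogenization_nat_pow abs_minus_commute)

lemma homogenization_eqI:
  assumes x: "x \<in> H" and bound: "\<And>n::nat. \<bar>f (x [^] n) - real n * a\<bar> \<le> B"
  shows "homogenization x = a"
proof -
  have "\<bar>f (x [^] (2 ^ k :: nat)) / 2 ^ k - a\<bar> \<le> B / 2 ^ k" for k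
    using divide_pow2_bound[of "f (x [^] (2 ^ k :: nat))" a "2 ^ k" B k] bound[of "2 ^ k"]
    by (simp add: mult.commute)
  then have "(\<lambda>k. f (x [^] (2 ^ k :: nat)) / 2 ^ k) \<longlonglongrightarrow> a"
    by (intro Lim_transform_pow2_bound[OF tendsto_const]) auto
  then show ?thesis using homogenization_LIMSEQ[OF x] LIMSEQ_unique by blast
qed

lemma homogenization_inv: "x \<in> H \<Longrightarrow> homogenization (inv x) = - homogenization x"
proof (rule homogenization_eqI[where B = "3 * K"])
  fix n :: nat
  assume x: "x \<in> H"
  have "inv x [^] n = inv (x [^] n)" using x by (simp add: nat_pow_inv)
  then show "\<bar>f (inv x [^] n) - real n * - homogenization x\<bar> \<le> 3 * K"
    using f_inv_close[of "x [^] n"] homogenization_pow_close[of x n] x by simp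
qed simp

lemma homogenization_int_pow:
  assumes x: "x \<in> H"
  shows "homogenization (x [^] (k::int)) = of_int k * homogenization x"
proof (cases k rule: int_cases)
  case (nonneg n)
  then show ?thesis using x by (simp add: int_pow_int homogenization_nat_pow)
next
  case (neg n)
  have "x [^] k = inv (x [^] Suc n)" unfolding neg using x by (simp only: int_pow_neg_int H.mem_carrier)
  then have "homogenization (x [^] k) = - homogenization (x [^] Suc n)"
    using homogenization_inv x by simp
  also have "\<dots> = of_int k * homogenization x" unfolding neg homogenization_nat_pow[OF x] by (simp add: algebra_simps)
  finally show ?thesis .
qed

end

locale homogeneous_quasimorphism_on = quasimorphism_on +
  assumes homogeneous: "x \<in> H \<Longrightarrow> f (x [^] (n::int)) = of_int n * f x"
    and conj_invariant: "g \<in> H \<Longrightarrow> x \<in> H \<Longrightarrow> f (g \<otimes> x \<otimes> inv g) = f x"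
begin

lemma f_one [simp]: "f \<one> = 0"
  using homogeneous[of \<one> 0] by simp

lemma f_inv: "x \<in> H \<Longrightarrow> f (inv x) = - f x"
  using homogeneous[of x "- 1"] by (simp add: int_pow_neg)

lemma f_nat_pow: "x \<in> H \<Longrightarrow> f (x [^] (n::nat)) = real n * f x"
  using homogeneous[of x "int n"] by (simp add: int_pow_int)

lemma abs_commut_le:
  assumes "g \<in> carrier G" and "l \<in> H" and "g \<otimes> l \<otimes> inv g \<in> H" and "f (g \<otimes> l \<otimes> inv g) = f l"
  shows "\<bar>f (commut G g l)\<bar> \<le> K"
  using defect_le[OF assms(3) H.m_inv_closed[OF assms(2)]] assms(2,4) unfolding commut_def
  by (simp add: f_inv)

lemma abs_comm_prod_le:
  assumes "\<And>i. i < k \<Longrightarrow> commut G (g i) (l i) \<in> H"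
    and "\<And>i. i < k \<Longrightarrow> \<bar>f (commut G (g i) (l i))\<bar> \<le> B"
  shows "\<bar>f (comm_prod G g l k)\<bar> \<le> real k * (B + K)"
  using assms
proof (induction k)
  case 0
  then show ?case by simp
next
  case (Suc k)
  have "comm_prod G g l k \<in> H" by (rule comm_prod_closed[OF subgroup_H]) (use Suc.prems in auto)
  then have "\<bar>f (comm_prod G g l (Suc k))\<bar> \<le> \<bar>f (comm_prod G g l k)\<bar> + \<bar>f (commut G (g k) (l k))\<bar> + K"
    using defect_le[of "comm_prod G g l k" "commut G (g k) (l k)"] Suc.prems(1)[of k] by simp
  moreover have "\<bar>f (comm_prod G g l k)\<bar> \<le> real k * (B + K)" using Suc by simp
  ultimately show ?case using Suc.prems(2)[of k] by (simp add: algebra_simps)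
qed

lemma hqm_invI:
  assumes "\<And>g x. g \<in> carrier G \<Longrightarrow> x \<in> H \<Longrightarrow> f (g \<otimes> x \<otimes> inv g) = f x"
  shows "hqm_inv G H f"
proof -
  have "defect G H f \<le> ereal K" using defect_le by (simp add: defect_le_iff)
  then have "defect G H f < \<infinity>" by (rule order_le_less_trans) simp
  then show ?thesis unfolding hqm_inv_def hqm_def using homogeneous assms by blast
qed

section \<open>Bavard's estimate\<close>

text \<open>With w n = x^n y^n (xy)^-n, w (n + 2) is a conjugate of a commutator times w n, so f (w n)
  grows at most like n (C + K) / 2, while it is n times the defect at (x, y) up to 2 K.\<close>
lemma defect_le_half_commutator_bound:
  assumes C: "\<And>a b. a \<in> H \<Longrightarrow> b \<in> H \<Longrightarrow> \<bar>f (commut G a b)\<bar> \<le> C"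
    and x: "x \<in> H" and y: "y \<in> H"
  shows "\<bar>f (x \<otimes> y) - f x - f y\<bar> \<le> (C + K) / 2"
proof -
  define w where "w n = x [^] n \<otimes> y [^] n \<otimes> inv ((x \<otimes> y) [^] (n::nat))" for n
  have w_in: "w n \<in> H" for n unfolding w_def using x y by simp
  have step: "\<bar>f (w (n + 2)) - f (w n)\<bar> \<le> C + K" for n
  proof -
    define c where "c = x [^] n \<otimes> commut G (x [^] (2::nat) \<otimes> y) (y [^] n \<otimes> inv x) \<otimes> inv (x [^] n)"
    have c_in: "c \<in> H" unfolding c_def using x y by simp
    have "\<bar>f c\<bar> \<le> C" unfolding c_def using C x y by (simp add: conj_invariant)
    moreover have "w (n + 2) = c \<otimes> w n"
      unfolding w_def c_def using pow_mult_pow_mult_inv_add_two x y by simp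
    ultimately show ?thesis using defect_le[OF c_in w_in[of n]] by simp
  qed
  have even: "\<bar>f (w (2 * m))\<bar> \<le> real m * (C + K)" for m
  proof (induction m)
    case 0
    then show ?case unfolding w_def by simp
  next
    case (Suc m)
    then show ?case using step[of "2 * m"] by (simp add: algebra_simps)
  qed
  have linear: "\<bar>f (w n) + real n * (f (x \<otimes> y) - f x - f y)\<bar> \<le> 2 * K" for n
  proof -
    have "\<bar>f (w n) - f (x [^] n \<otimes> y [^] n) - f (inv ((x \<otimes> y) [^] n))\<bar> \<le> K"
      unfolding w_def using defect_le x y by simp
    moreover have "\<bar>f (x [^] n \<otimes> y [^] n) - f (x [^] n) - f (y [^] n)\<bar> \<le> K"
      using defect_le x y by simp
    ultimately show ?thesis using x y by (simp add: f_inv f_nat_pow algebra_simps)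
  qed
  define \<delta> where "\<delta> = \<bar>f (x \<otimes> y) - f x - f y\<bar>"
  have "real m * (2 * \<delta>) \<le> real m * (C + K) + 2 * K" for m
  proof -
    have "real (2 * m) * \<delta> \<le> \<bar>f (w (2 * m))\<bar> + 2 * K"
      using linear[of "2 * m"] unfolding \<delta>_def by (simp add: abs_mult)
    then show ?thesis using even[of m] by simp
  qed
  then have "2 * \<delta> \<le> C + K" by (rule le_if_linear_bound)
  then show ?thesis unfolding \<delta>_def by simp
qed

text \<open>Bavard's estimate. For the optimal defect bound d the previous lemma gives d \<le> (C + d) / 2.\<close>
theorem defect_le_commutator_bound:
  assumes C: "\<And>a b. a \<in> H \<Longrightarrow> b \<in> H \<Longrightarrow> \<bar>f (commut G a b)\<bar> \<le> C"
  shows "defect G H f \<le> ereal C"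
proof -
  define d where "d = real_of_ereal (defect G H f)"
  have "defect G H f \<le> ereal K" using defect_le by (simp add: defect_le_iff)
  moreover have "ereal 0 \<le> defect G H f" using defect_ge[of \<one> H \<one> f G] by simp
  ultimately have d: "defect G H f = ereal d" unfolding d_def by (cases "defect G H f") auto
  interpret optimal: homogeneous_quasimorphism_on G H f d
    by unfold_locales (use d defect_le_iff[of G H f d] homogeneous conj_invariant in auto)
  have "defect G H f \<le> ereal ((C + d) / 2)"
    unfolding defect_le_iff using optimal.defect_le_half_commutator_bound[OF C] by blast
  then have "d \<le> C" using d by simp
  then show ?thesis using d by simp
qed

end

lemma homogeneous_quasimorphism_on_if_hqm_inv:
  assumes "group G" and "subgroup H G" and "hqm_inv G H \<phi>"
  shows "homogeneous_quasimorphism_on G H \<phi> (real_of_ereal (defect G H \<phi>))"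
proof -
  interpret group G by fact
  show ?thesis
    using assms(2,3) defect_finite_bound subgroup.mem_carrier[OF assms(2)]
    by (intro homogeneous_quasimorphism_on.intro quasimorphism_on.intro
        homogeneous_quasimorphism_on_axioms.intro quasimorphism_on_axioms.intro)
      (auto simp: hqm_inv_def hqm_def group_axioms)
qed

section \<open>Mixed commutator defects\<close>

context group begin

lemma Dt_one_eq:
  assumes "L \<subseteq> carrier G"
  shows "Dt G L 1 \<nu> = (SUP (g, l) \<in> carrier G \<times> L. ereal \<bar>\<nu> (commut G g l)\<bar>)"
proof -
  have "{ereal \<bar>\<nu> (comm_prod G g l 1)\<bar> | g l. (\<forall>i<1. g i \<in> carrier G) \<and> (\<forall>i<1. l i \<in> L)} =
      (\<lambda>(g, l). ereal \<bar>\<nu> (commut G g l)\<bar>) ` (carrier G \<times> L)"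
  proof (intro equalityI subsetI)
    fix y assume "y \<in> {ereal \<bar>\<nu> (comm_prod G g l 1)\<bar> | g l. (\<forall>i<1. g i \<in> carrier G) \<and> (\<forall>i<1. l i \<in> L)}"
    then obtain g l where "y = ereal \<bar>\<nu> (comm_prod G g l 1)\<bar>" "g 0 \<in> carrier G" "l 0 \<in> L" by auto
    then show "y \<in> (\<lambda>(g, l). ereal \<bar>\<nu> (commut G g l)\<bar>) ` (carrier G \<times> L)"
      using assms by (auto intro!: image_eqI[of _ _ "(g 0, l 0)"])
  next
    fix y assume "y \<in> (\<lambda>(g, l). ereal \<bar>\<nu> (commut G g l)\<bar>) ` (carrier G \<times> L)"
    then obtain g l where "y = ereal \<bar>\<nu> (commut G g l)\<bar>" "g \<in> carrier G" "l \<in> L" by auto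
    moreover have "comm_prod G (\<lambda>_. g) (\<lambda>_. l) 1 = commut G g l" using calculation assms by auto
    ultimately have "y = ereal \<bar>\<nu> (comm_prod G (\<lambda>_. g) (\<lambda>_. l) 1)\<bar>" by simp
    then show "y \<in> {ereal \<bar>\<nu> (comm_prod G g l 1)\<bar> | g l. (\<forall>i<1. g i \<in> carrier G) \<and> (\<forall>i<1. l i \<in> L)}"
      using \<open>g \<in> carrier G\<close> \<open>l \<in> L\<close> by blast
  qed
  then show ?thesis unfolding Dt_def by simp
qed

lemma Dt_le:
  assumes "\<And>g l. \<forall>i<t. g i \<in> carrier G \<Longrightarrow> \<forall>i<t. l i \<in> L \<Longrightarrow> \<bar>\<nu> (comm_prod G g l t)\<bar> \<le> c"
  shows "Dt G L t \<nu> \<le> ereal c"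
  unfolding Dt_def using assms by (auto intro!: Sup_least)

lemma Dt_one_le_Dt:
  assumes "subgroup L G" and "1 \<le> t"
  shows "Dt G L 1 \<nu> \<le> Dt G L t \<nu>"
proof -
  have L: "L \<subseteq> carrier G" using subgroup.subset[OF assms(1)] .
  obtain k where t: "t = Suc k" using assms(2) by (cases t) auto
  have "ereal \<bar>\<nu> (commut G g l)\<bar> \<le> Dt G L t \<nu>" if "g \<in> carrier G" "l \<in> L" for g l
  proof -
    let ?g = "\<lambda>i. if i = 0 then g else \<one>" and ?l = "\<lambda>i. if i = 0 then l else \<one>"
    have "commut G g l = comm_prod G ?g ?l t"
      unfolding t by (rule comm_prod_single[symmetric]) (use that L in auto)
    moreover have "(\<forall>i<t. ?g i \<in> carrier G) \<and> (\<forall>i<t. ?l i \<in> L)"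
      using that subgroup.one_closed[OF assms(1)] by auto
    then have "ereal \<bar>\<nu> (comm_prod G ?g ?l t)\<bar> \<in>
        {ereal \<bar>\<nu> (comm_prod G g l t)\<bar> | g l. (\<forall>i<t. g i \<in> carrier G) \<and> (\<forall>i<t. l i \<in> L)}"
      by blast
    ultimately show ?thesis unfolding Dt_def by (simp add: Sup_upper)
  qed
  then show ?thesis unfolding Dt_one_eq[OF L] by (auto intro: SUP_least)
qed

end

locale quasimorphism_extension_setting = group G for G (structure) +
  fixes L N :: "'a set" and \<nu> :: "'a \<Rightarrow> real"
  assumes L_normal: "L \<lhd> G" and N_normal: "N \<lhd> G" and N_subset_L: "N \<subseteq> L"
    and commut_in_N: "g \<in> carrier G \<Longrightarrow> l \<in> L \<Longrightarrow> commut G g l \<in> N"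
    and nu: "hqm_inv G N \<nu>"
begin

lemma L_subgroup: "subgroup L G"
  using L_normal normal_imp_subgroup by blast

lemma N_subgroup: "subgroup N G"
  using N_normal normal_imp_subgroup by blast

sublocale nu: homogeneous_quasimorphism_on G N \<nu> "real_of_ereal (defect G N \<nu>)"
  by (rule homogeneous_quasimorphism_on_if_hqm_inv[OF is_group N_subgroup nu])

lemma L_carrier [simp]: "l \<in> L \<Longrightarrow> l \<in> carrier G"
  using subgroup.mem_carrier[OF L_subgroup] .

lemma defect_N_finite: "defect G N \<nu> < \<infinity>"
  using nu unfolding hqm_inv_def hqm_def by blast

lemma defect_N_eq: "defect G N \<nu> = ereal (real_of_ereal (defect G N \<nu>))"
  using defect_N_finite defect_ge[of \<one> N \<one> \<nu> G] by (cases "defect G N \<nu>") auto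

lemma nu_conj_invariant: "g \<in> carrier G \<Longrightarrow> x \<in> N \<Longrightarrow> \<nu> (g \<otimes> x \<otimes> inv g) = \<nu> x"
  using nu unfolding hqm_inv_def by blast

lemma conj_closed_between:
  assumes "subgroup M G" "N \<subseteq> M" "M \<subseteq> L" "g \<in> carrier G" "m \<in> M"
  shows "g \<otimes> m \<otimes> inv g \<in> M"
proof -
  have "g \<otimes> m \<otimes> inv g = commut G g m \<otimes> m"
    using assms subgroup.mem_carrier by (metis conj_eq_commut_mult)
  moreover have "commut G g m \<in> M" using commut_in_N assms by blast
  ultimately show ?thesis using assms subgroup.m_closed by metis
qed

lemma Dt_finite_if_extendable:
  assumes psi: "hqm_inv G L \<psi>" and ext: "\<forall>x\<in>N. \<psi> x = \<nu> x"
  shows "Dt G L t \<nu> < \<infinity>"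
proof -
  interpret psi: homogeneous_quasimorphism_on G L \<psi> "real_of_ereal (defect G L \<psi>)"
    by (rule homogeneous_quasimorphism_on_if_hqm_inv[OF is_group L_subgroup psi])
  define E where "E = real_of_ereal (defect G L \<psi>)"
  have "\<bar>\<nu> (comm_prod G g l t)\<bar> \<le> real t * (E + E)"
    if g: "\<forall>i<t. g i \<in> carrier G" and l: "\<forall>i<t. l i \<in> L" for g l
  proof -
    have commut_N: "commut G (g i) (l i) \<in> N" if "i < t" for i using commut_in_N g l that by simp
    then have "comm_prod G g l t \<in> N" by (rule comm_prod_closed[OF N_subgroup])
    moreover have "\<bar>\<psi> (comm_prod G g l t)\<bar> \<le> real t * (E + E)"
      unfolding E_def
    proof (rule psi.abs_comm_prod_le)
      fix i assume "i < t"
      then show "commut G (g i) (l i) \<in> L" using commut_N N_subset_L by blast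
      show "\<bar>\<psi> (commut G (g i) (l i))\<bar> \<le> real_of_ereal (defect G L \<psi>)"
        using \<open>i < t\<close> g l normal.inv_op_closed2[OF L_normal] psi unfolding hqm_inv_def
        by (intro psi.abs_commut_le) auto
    qed
    ultimately show ?thesis using ext by simp
  qed
  then have "Dt G L t \<nu> \<le> ereal (real t * (E + E))" by (rule Dt_le)
  then show ?thesis by (rule order_le_less_trans) simp
qed

lemma L_nat_pow_closed: "l \<in> L \<Longrightarrow> l [^] (n::nat) \<in> L"
  using subgroup_int_pow_closed[OF L_subgroup, of l "int n"] by (simp add: int_pow_int)

lemma Dt_one_ge: "g \<in> carrier G \<Longrightarrow> l \<in> L \<Longrightarrow> ereal \<bar>\<nu> (commut G g l)\<bar> \<le> Dt G L 1 \<nu>"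
  unfolding Dt_one_eq[OF subgroup.subset[OF L_subgroup]] by (intro SUP_upper2[of "(g, l)"]) auto

lemma commut_bound_if_Dt_one_finite:
  assumes "Dt G L 1 \<nu> < \<infinity>" and "g \<in> carrier G" and "l \<in> L"
  shows "\<bar>\<nu> (commut G g l)\<bar> \<le> real_of_ereal (Dt G L 1 \<nu>)"
  using Dt_one_ge[OF assms(2,3)] assms(1) by (cases "Dt G L 1 \<nu>") auto

lemma abs_commut_le_defect:
  assumes C: "\<And>g l. g \<in> carrier G \<Longrightarrow> l \<in> L \<Longrightarrow> \<bar>\<nu> (commut G g l)\<bar> \<le> C"
    and g: "g \<in> carrier G" and l: "l \<in> L"
  shows "\<bar>\<nu> (commut G g l)\<bar> \<le> real_of_ereal (defect G N \<nu>)"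
proof -
  define D where "D = real_of_ereal (defect G N \<nu>)"
  define c where "c = commut G g l"
  have c_N: "c \<in> N" unfolding c_def using commut_in_N[OF g l] .
  have linear: "\<bar>\<nu> (commut G g (l [^] n)) - real n * \<nu> c\<bar> \<le> real n * D" for n
  proof (induction n)
    case 0
    then show ?case using g by (simp add: commut_def)
  next
    case (Suc n)
    have conj: "l [^] n \<otimes> c \<otimes> inv (l [^] n) \<in> N"
      using normal.inv_op_closed2[OF N_normal _ c_N] l by simp
    have "commut G g (l [^] Suc n) = commut G g (l [^] n) \<otimes> (l [^] n \<otimes> c \<otimes> inv (l [^] n))"
      unfolding c_def using g l by (intro commut_pow_Suc) auto
    moreover have "\<nu> (l [^] n \<otimes> c \<otimes> inv (l [^] n)) = \<nu> c" using nu_conj_invariant c_N l by simp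
    moreover have "\<bar>\<nu> (commut G g (l [^] n) \<otimes> (l [^] n \<otimes> c \<otimes> inv (l [^] n)))
        - \<nu> (commut G g (l [^] n)) - \<nu> (l [^] n \<otimes> c \<otimes> inv (l [^] n))\<bar> \<le> D"
      unfolding D_def by (rule nu.defect_le[OF commut_in_N[OF g L_nat_pow_closed[OF l]] conj])
    ultimately show ?case using Suc.IH by (simp add: algebra_simps)
  qed
  have "real n * \<bar>\<nu> c\<bar> \<le> real n * D + C" for n
    using linear[of n] C[OF g L_nat_pow_closed[OF l, of n]] by (simp add: abs_mult)
  then show ?thesis unfolding c_def D_def by (rule le_if_linear_bound)
qed

lemma Dt_one_le_defect:
  assumes "Dt G L 1 \<nu> < \<infinity>"
  shows "Dt G L 1 \<nu> \<le> defect G N \<nu>"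
proof -
  have "Dt G L 1 \<nu> \<le> ereal (real_of_ereal (defect G N \<nu>))"
    unfolding Dt_one_eq[OF subgroup.subset[OF L_subgroup]]
    using abs_commut_le_defect[OF commut_bound_if_Dt_one_finite[OF assms]] by (auto intro!: SUP_least)
  then show ?thesis using defect_N_eq by simp
qed

lemma defect_le_Dt_one: "defect G N \<nu> \<le> Dt G L 1 \<nu>"
proof (cases "Dt G L 1 \<nu> = \<infinity>")
  case False
  then have finite: "Dt G L 1 \<nu> < \<infinity>" by (simp add: less_top)
  have "defect G N \<nu> \<le> ereal (real_of_ereal (Dt G L 1 \<nu>))"
    by (rule nu.defect_le_commutator_bound)
      (use commut_bound_if_Dt_one_finite[OF finite] N_subset_L in auto)
  moreover have "Dt G L 1 \<nu> = ereal (real_of_ereal (Dt G L 1 \<nu>))"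
    using finite Dt_one_ge[of \<one> \<one>] subgroup.one_closed[OF L_subgroup] by (cases "Dt G L 1 \<nu>") auto
  ultimately show ?thesis by simp
qed simp

section \<open>Extension from N to L\<close>

definition partial_extension ::
    "real \<Rightarrow> 'a set \<Rightarrow> ('a \<Rightarrow> real) \<Rightarrow> bool" where
  "partial_extension C M \<psi> \<longleftrightarrow> subgroup M G \<and> N \<subseteq> M \<and> M \<subseteq> L \<and> (\<forall>x\<in>N. \<psi> x = \<nu> x) \<and>
     (\<forall>x\<in>M. \<forall>k::int. \<psi> (x [^] k) = of_int k * \<psi> x) \<and>
     (\<forall>g\<in>carrier G. \<forall>x\<in>M. \<psi> (g \<otimes> x \<otimes> inv g) = \<psi> x) \<and>
     (\<forall>x\<in>M. \<forall>y\<in>M. \<bar>\<psi> (x \<otimes> y) - \<psi> x - \<psi> y\<bar> \<le> C)"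

lemma homogeneous_quasimorphism_on_if_partial_extension:
  "partial_extension C M \<psi> \<Longrightarrow> homogeneous_quasimorphism_on G M \<psi> C"
  unfolding partial_extension_def
  by (intro homogeneous_quasimorphism_on.intro quasimorphism_on.intro
      homogeneous_quasimorphism_on_axioms.intro quasimorphism_on_axioms.intro)
    (auto simp: is_group dest: subgroup.mem_carrier)

end

locale one_step_extension = quasimorphism_extension_setting +
  fixes C :: real and M :: "'a set" and \<psi> :: "'a \<Rightarrow> real" and x :: 'a
  assumes commut_bound: "g \<in> carrier G \<Longrightarrow> l \<in> L \<Longrightarrow> \<bar>\<nu> (commut G g l)\<bar> \<le> C"
    and partial: "partial_extension C M \<psi>"
    and x_in_L: "x \<in> L"
begin

sublocale psi: homogeneous_quasimorphism_on G M \<psi> C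
  by (rule homogeneous_quasimorphism_on_if_partial_extension[OF partial])

lemma N_subset_M: "N \<subseteq> M" and M_subset_L: "M \<subseteq> L" and psi_nu: "y \<in> N \<Longrightarrow> \<psi> y = \<nu> y"
  and psi_conj_invariant: "g \<in> carrier G \<Longrightarrow> y \<in> M \<Longrightarrow> \<psi> (g \<otimes> y \<otimes> inv g) = \<psi> y"
  using partial unfolding partial_extension_def by auto

lemma x_carrier [simp]: "x \<in> carrier G"
  using x_in_L by simp

lemma conj_M: "g \<in> carrier G \<Longrightarrow> m \<in> M \<Longrightarrow> g \<otimes> m \<otimes> inv g \<in> M"
  by (rule conj_closed_between[OF psi.subgroup_H N_subset_M M_subset_L])

definition Mx :: "'a set" where
  "Mx = {m \<otimes> x [^] (j::int) | m j. m \<in> M}"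

lemma MxE:
  assumes "y \<in> Mx"
  obtains m j where "m \<in> M" "y = m \<otimes> x [^] (j::int)"
  using assms unfolding Mx_def by blast

lemma Mx_subgroup: "subgroup Mx G"
proof (rule subgroupI)
  show "Mx \<subseteq> carrier G" by (auto elim: MxE)
  have "\<one> \<otimes> x [^] (0::int) \<in> Mx" unfolding Mx_def using psi.H.one_closed by blast
  then show "Mx \<noteq> {}" by blast
next
  fix y assume "y \<in> Mx"
  then obtain m j where m: "m \<in> M" and y: "y = m \<otimes> x [^] (j::int)" by (rule MxE)
  have "inv y = (x [^] (- j) \<otimes> inv m \<otimes> inv (x [^] (- j))) \<otimes> x [^] (- j)"
    unfolding y using m by (simp add: inv_mult_group m_assoc int_pow_neg)
  moreover have "x [^] (- j) \<otimes> inv m \<otimes> inv (x [^] (- j)) \<in> M" using conj_M m by simp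
  ultimately show "inv y \<in> Mx" unfolding Mx_def by blast
next
  fix y z assume "y \<in> Mx" "z \<in> Mx"
  then obtain m i m' j where m: "m \<in> M" "y = m \<otimes> x [^] (i::int)" and m': "m' \<in> M" "z = m' \<otimes> x [^] (j::int)"
    by (metis MxE)
  have "y \<otimes> z = (m \<otimes> (x [^] i \<otimes> m' \<otimes> inv (x [^] i))) \<otimes> x [^] (i + j)"
    using m m' by (simp add: int_pow_mult m_assoc)
  moreover have "m \<otimes> (x [^] i \<otimes> m' \<otimes> inv (x [^] i)) \<in> M" using conj_M m m' by simp
  ultimately show "y \<otimes> z \<in> Mx" unfolding Mx_def by blast
qed

lemma M_subset_Mx: "M \<subseteq> Mx"
proof
  fix m assume "m \<in> M"
  then have "m = m \<otimes> x [^] (0::int) \<and> m \<in> M" by simp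
  then show "m \<in> Mx" unfolding Mx_def by blast
qed

lemma x_in_Mx: "x \<in> Mx"
proof -
  have "x = \<one> \<otimes> x [^] (1::int)" by simp
  then show ?thesis unfolding Mx_def using psi.H.one_closed by blast
qed

lemma Mx_subset_L: "Mx \<subseteq> L"
  using M_subset_L subgroup_int_pow_closed[OF L_subgroup x_in_L] subgroup.m_closed[OF L_subgroup]
  by (auto elim!: MxE)

text \<open>The powers of x lying in M form a subgroup of the integers on which the homogeneous \<psi> is
  additive, hence linear; slope is its slope (a junk value when no nontrivial power lies in M).\<close>
definition slope :: real where
  "slope = (let e = SOME e::int. e \<noteq> 0 \<and> x [^] e \<in> M in \<psi> (x [^] e) / of_int e)"

lemma psi_x_pow: "x [^] (e::int) \<in> M \<Longrightarrow> \<psi> (x [^] e) = of_int e * slope"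
proof (cases "e = 0")
  case False
  assume e: "x [^] e \<in> M"
  define e0 where "e0 = (SOME e::int. e \<noteq> 0 \<and> x [^] e \<in> M)"
  have e0: "e0 \<noteq> 0" "x [^] e0 \<in> M"
    unfolding e0_def using someI[of "\<lambda>e. e \<noteq> 0 \<and> x [^] e \<in> M" e] False e by auto
  have "of_int e0 * \<psi> (x [^] e) = \<psi> ((x [^] e) [^] e0)" using psi.homogeneous e by simp
  also have "(x [^] e) [^] e0 = (x [^] e0) [^] e" by (simp add: int_pow_pow mult.commute)
  also have "\<psi> ((x [^] e0) [^] e) = of_int e * \<psi> (x [^] e0)" using psi.homogeneous e0 by simp
  finally show ?thesis using e0(1) unfolding slope_def e0_def[symmetric] Let_def by (simp add: field_simps)
qed simp

text \<open>A first, only approximately well-defined, extension: the representation y = m x^j is not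
  unique, but by the previous lemma any two choices give values at most C apart.\<close>
definition pre_extension :: "'a \<Rightarrow> real" where
  "pre_extension y = (SOME v. \<exists>m\<in>M. \<exists>j::int. y = m \<otimes> x [^] j \<and> v = \<psi> m + of_int j * slope)"

lemma pre_extension_close:
  assumes m: "m \<in> M"
  shows "\<bar>pre_extension (m \<otimes> x [^] j) - (\<psi> m + of_int j * slope)\<bar> \<le> C"
proof -
  obtain m' j' where m': "m' \<in> M" and eq: "m \<otimes> x [^] j = m' \<otimes> x [^] (j'::int)"
    and val: "pre_extension (m \<otimes> x [^] j) = \<psi> m' + of_int j' * slope"
    using someI_ex[of "\<lambda>v. \<exists>m'\<in>M. \<exists>j'::int. m \<otimes> x [^] j = m' \<otimes> x [^] j' \<and> v = \<psi> m' + of_int j' * slope"] m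
    unfolding pre_extension_def by blast
  have "m = m \<otimes> x [^] j \<otimes> inv (x [^] j)" using m by (simp add: m_assoc)
  also have "\<dots> = m' \<otimes> x [^] (j' - j)" unfolding eq using m' by (simp add: m_assoc int_pow_diff)
  finally have m_eq: "m = m' \<otimes> x [^] (j' - j)" .
  then have "x [^] (j' - j) = inv m' \<otimes> m" using m' by simp
  then have x_pow: "x [^] (j' - j) \<in> M" using m m' by simp
  have "\<bar>\<psi> m - \<psi> m' - \<psi> (x [^] (j' - j))\<bar> \<le> C" using psi.defect_le[OF m' x_pow] m_eq by simp
  then show ?thesis using val psi_x_pow[OF x_pow] by (simp add: algebra_simps)
qed

lemma pre_extension_defect:
  assumes "y \<in> Mx" and "z \<in> Mx"
  shows "\<bar>pre_extension (y \<otimes> z) - pre_extension y - pre_extension z\<bar> \<le> 4 * C"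
proof -
  obtain m i where m: "m \<in> M" and y: "y = m \<otimes> x [^] (i::int)" using assms(1) by (rule MxE)
  obtain m' j where m': "m' \<in> M" and z: "z = m' \<otimes> x [^] (j::int)" using assms(2) by (rule MxE)
  define m'' where "m'' = x [^] i \<otimes> m' \<otimes> inv (x [^] i)"
  have m'': "m'' \<in> M" unfolding m''_def using conj_M m' by simp
  have "y \<otimes> z = (m \<otimes> m'') \<otimes> x [^] (i + j)"
    unfolding y z m''_def using m m' by (simp add: m_assoc int_pow_mult)
  then have "\<bar>pre_extension (y \<otimes> z) - (\<psi> (m \<otimes> m'') + of_int (i + j) * slope)\<bar> \<le> C"
    using pre_extension_close[OF psi.H.m_closed[OF m m''], of "i + j"] by simp
  moreover have "\<bar>\<psi> (m \<otimes> m'') - \<psi> m - \<psi> m''\<bar> \<le> C" using psi.defect_le m m'' by simp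
  moreover have "\<psi> m'' = \<psi> m'" unfolding m''_def using psi_conj_invariant m' by simp
  moreover have "\<bar>pre_extension y - (\<psi> m + of_int i * slope)\<bar> \<le> C" using pre_extension_close m y by simp
  moreover have "\<bar>pre_extension z - (\<psi> m' + of_int j * slope)\<bar> \<le> C" using pre_extension_close m' z by simp
  ultimately show ?thesis by (simp add: algebra_simps)
qed

lemma pre_extension_conj:
  assumes g: "g \<in> carrier G" and "y \<in> Mx"
  shows "\<bar>pre_extension (g \<otimes> y \<otimes> inv g) - pre_extension y\<bar> \<le> 4 * C"
proof -
  obtain m i where m: "m \<in> M" and y: "y = m \<otimes> x [^] (i::int)" using assms(2) by (rule MxE)
  define c where "c = commut G g (x [^] i)"
  have c_N: "c \<in> N"
    unfolding c_def using commut_in_N[OF g subgroup_int_pow_closed[OF L_subgroup x_in_L]] .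
  then have c_M: "c \<in> M" using N_subset_M by blast
  have gm: "g \<otimes> m \<otimes> inv g \<in> M" using conj_M[OF g m] .
  have "g \<otimes> y \<otimes> inv g = ((g \<otimes> m \<otimes> inv g) \<otimes> c) \<otimes> x [^] i"
    unfolding y c_def commut_def using g m by (simp add: m_assoc)
  then have "\<bar>pre_extension (g \<otimes> y \<otimes> inv g) - (\<psi> ((g \<otimes> m \<otimes> inv g) \<otimes> c) + of_int i * slope)\<bar> \<le> C"
    using pre_extension_close gm c_M by simp
  moreover have "\<bar>\<psi> ((g \<otimes> m \<otimes> inv g) \<otimes> c) - \<psi> (g \<otimes> m \<otimes> inv g) - \<psi> c\<bar> \<le> C"
    using psi.defect_le gm c_M by simp
  moreover have "\<psi> (g \<otimes> m \<otimes> inv g) = \<psi> m" using psi_conj_invariant g m by simp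
  moreover have "\<bar>\<psi> c\<bar> \<le> C"
    using psi_nu[OF c_N] commut_bound[OF g subgroup_int_pow_closed[OF L_subgroup x_in_L]] c_def by simp
  moreover have "\<bar>pre_extension y - (\<psi> m + of_int i * slope)\<bar> \<le> C" using pre_extension_close m y by simp
  ultimately show ?thesis by (simp add: algebra_simps)
qed

sublocale pre: quasimorphism_on G Mx pre_extension "4 * C"
  by (rule quasimorphism_on.intro[OF is_group quasimorphism_on_axioms.intro[OF Mx_subgroup]])
    (rule pre_extension_defect)

lemma homogenization_eq_psi: "m \<in> M \<Longrightarrow> pre.homogenization m = \<psi> m"
proof (rule pre.homogenization_eqI[where B = C])
  fix n :: nat
  assume m: "m \<in> M"
  show "\<bar>pre_extension (m [^] n) - real n * \<psi> m\<bar> \<le> C"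
    using pre_extension_close[of "m [^] n" 0] m by (simp add: psi.f_nat_pow)
qed (use M_subset_Mx in auto)

lemma homogenization_conj_invariant:
  assumes g: "g \<in> carrier G" and y: "y \<in> Mx"
  shows "pre.homogenization (g \<otimes> y \<otimes> inv g) = pre.homogenization y"
proof (rule pre.homogenization_eqI[where B = "8 * C"])
  show "g \<otimes> y \<otimes> inv g \<in> Mx"
    using conj_closed_between[OF Mx_subgroup _ Mx_subset_L g y] N_subset_M M_subset_Mx by blast
  fix n :: nat
  have "(g \<otimes> y \<otimes> inv g) [^] n = g \<otimes> y [^] n \<otimes> inv g" using g y by (simp add: conj_nat_pow)
  then show "\<bar>pre_extension ((g \<otimes> y \<otimes> inv g) [^] n) - real n * pre.homogenization y\<bar> \<le> 8 * C"
    using pre_extension_conj[OF g pre.H_nat_pow_closed[OF y, of n]] pre.homogenization_pow_close[OF y, of n]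
    by simp
qed

lemma partial_extension_Mx: "partial_extension C Mx pre.homogenization"
proof -
  have "\<bar>pre.homogenization (a \<otimes> b) - pre.homogenization a - pre.homogenization b\<bar> \<le> 16 * C"
    if "a \<in> Mx" "b \<in> Mx" for a b
    using pre.homogenization_defect[OF that] by simp
  then interpret h: homogeneous_quasimorphism_on G Mx pre.homogenization "16 * C"
    by (intro homogeneous_quasimorphism_on.intro quasimorphism_on.intro
        homogeneous_quasimorphism_on_axioms.intro quasimorphism_on_axioms.intro)
      (simp_all add: is_group Mx_subgroup pre.homogenization_int_pow homogenization_conj_invariant)
  have extends_nu: "pre.homogenization y = \<nu> y" if "y \<in> N" for y
    using that N_subset_M homogenization_eq_psi psi_nu by auto
  have "defect G Mx pre.homogenization \<le> ereal C"
  proof (rule h.defect_le_commutator_bound)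
    fix a b assume "a \<in> Mx" "b \<in> Mx"
    then show "\<bar>pre.homogenization (commut G a b)\<bar> \<le> C"
      using commut_in_N commut_bound extends_nu Mx_subset_L by auto
  qed
  then show ?thesis
    unfolding partial_extension_def defect_le_iff
    using Mx_subgroup N_subset_M M_subset_Mx Mx_subset_L extends_nu h.homogeneous
      homogenization_conj_invariant by (intro conjI) auto
qed

end

context quasimorphism_extension_setting begin

lemma partial_extension_extend:
  assumes "\<And>g l. g \<in> carrier G \<Longrightarrow> l \<in> L \<Longrightarrow> \<bar>\<nu> (commut G g l)\<bar> \<le> C"
    and "partial_extension C M \<psi>" and "x \<in> L"
  shows "\<exists>M' \<psi>'. partial_extension C M' \<psi>' \<and> M \<subseteq> M' \<and> x \<in> M' \<and> (\<forall>y\<in>M. \<psi>' y = \<psi> y)"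
proof -
  interpret one_step_extension G L N \<nu> C M \<psi> x
    by unfold_locales (use assms in auto)
  show ?thesis using partial_extension_Mx M_subset_Mx x_in_Mx homogenization_eq_psi by blast
qed

lemma partial_extension_cong:
  assumes "partial_extension C M \<psi>" and "\<And>y. y \<in> M \<Longrightarrow> \<psi>' y = \<psi> y"
  shows "partial_extension C M \<psi>'"
proof -
  have M: "subgroup M G" "N \<subseteq> M" "M \<subseteq> L" using assms(1) unfolding partial_extension_def by auto
  have "x \<in> M \<Longrightarrow> x [^] (k::int) \<in> M" "x \<in> M \<Longrightarrow> y \<in> M \<Longrightarrow> x \<otimes> y \<in> M"
    "g \<in> carrier G \<Longrightarrow> x \<in> M \<Longrightarrow> g \<otimes> x \<otimes> inv g \<in> M" for x y g k
    by (simp_all add: subgroup_int_pow_closed[OF M(1)] subgroup.m_closed[OF M(1)] conj_closed_between[OF M])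
  then show ?thesis
    using assms(1) unfolding partial_extension_def by (simp add: assms(2) subsetD[OF M(2)])
qed

definition extension_graphs :: "real \<Rightarrow> ('a \<times> real) set set" where
  "extension_graphs C = {R. single_valued R \<and> partial_extension C (Domain R) (graph_fun R)}"

lemma graph_in_extension_graphs:
  "partial_extension C M \<psi> \<Longrightarrow> (\<lambda>y. (y, \<psi> y)) ` M \<in> extension_graphs C"
  unfolding extension_graphs_def
  by (auto simp: single_valued_def Domain_fst image_image graph_fun_graph intro: partial_extension_cong)

lemma Union_chain_in_extension_graphs:
  assumes "\<C> \<noteq> {}" and "subset.chain (extension_graphs C) \<C>"
  shows "\<Union>\<C> \<in> extension_graphs C"
proof -
  have chain: "\<And>R S. R \<in> \<C> \<Longrightarrow> S \<in> \<C> \<Longrightarrow> R \<subseteq> S \<or> S \<subseteq> R"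
    and sv: "\<And>R. R \<in> \<C> \<Longrightarrow> single_valued R"
    and pe: "\<And>R. R \<in> \<C> \<Longrightarrow> partial_extension C (Domain R) (graph_fun R)"
    using assms(2) unfolding subset_chain_def extension_graphs_def by auto
  define \<phi> where "\<phi> = graph_fun (\<Union>\<C>)"
  have \<phi>: "R \<in> \<C> \<Longrightarrow> y \<in> Domain R \<Longrightarrow> \<phi> y = graph_fun R y" for R y
    unfolding \<phi>_def using graph_fun_Union_chain[OF sv chain] by blast
  note pe_conds = pe[unfolded partial_extension_def]
  have "A \<subseteq> B \<or> B \<subseteq> A" if "A \<in> Domain ` \<C>" "B \<in> Domain ` \<C>" for A B
    using that chain by (metis Domain_mono imageE)
  then have "subgroup (\<Union>(Domain ` \<C>)) G"
    by (intro subgroup_Union_chain) (use assms(1) pe_conds in auto)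
  moreover have "Domain (\<Union>\<C>) = \<Union>(Domain ` \<C>)" by blast
  ultimately have subgroup: "subgroup (Domain (\<Union>\<C>)) G" by simp
  obtain R0 where R0: "R0 \<in> \<C>" using assms(1) by blast
  have "N \<subseteq> Domain (\<Union>\<C>)" "Domain (\<Union>\<C>) \<subseteq> L"
    using pe_conds R0 by blast+
  moreover have "\<phi> x = \<nu> x" if x: "x \<in> N" for x
  proof -
    have "x \<in> Domain R0" using pe_conds[OF R0] x by blast
    then show ?thesis using pe_conds[OF R0] \<phi>[OF R0] x by simp
  qed
  moreover have "\<phi> (x [^] k) = of_int k * \<phi> x" if x: "x \<in> Domain (\<Union>\<C>)" for x and k :: int
  proof -
    obtain R where R: "R \<in> \<C>" "x \<in> Domain R" using x by blast
    then have "x [^] k \<in> Domain R" using pe_conds[OF R(1)] by (simp add: subgroup_int_pow_closed)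
    then show ?thesis using pe_conds[OF R(1)] \<phi>[OF R(1)] R(2) by simp
  qed
  moreover have "\<phi> (g \<otimes> x \<otimes> inv g) = \<phi> x" if g: "g \<in> carrier G" and x: "x \<in> Domain (\<Union>\<C>)" for g x
  proof -
    obtain R where R: "R \<in> \<C>" "x \<in> Domain R" using x by blast
    then have "g \<otimes> x \<otimes> inv g \<in> Domain R"
      by (intro conj_closed_between[OF _ _ _ g R(2)]) (use pe_conds[OF R(1)] in auto)
    then show ?thesis using pe_conds[OF R(1)] \<phi>[OF R(1)] R(2) g by simp
  qed
  moreover have "\<bar>\<phi> (a \<otimes> b) - \<phi> a - \<phi> b\<bar> \<le> C" if ab: "a \<in> Domain (\<Union>\<C>)" "b \<in> Domain (\<Union>\<C>)" for a b
  proof -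
    obtain R where R: "R \<in> \<C>" "a \<in> Domain R" "b \<in> Domain R" using Domain_Union_chain_common[OF chain ab] by blast
    then have "a \<otimes> b \<in> Domain R" using pe_conds[OF R(1)] by (simp add: subgroup.m_closed)
    then show ?thesis using pe_conds[OF R(1)] \<phi>[OF R(1)] R(2,3) by simp
  qed
  ultimately have "partial_extension C (Domain (\<Union>\<C>)) \<phi>"
    unfolding partial_extension_def using subgroup by blast
  then show ?thesis
    unfolding extension_graphs_def \<phi>_def using single_valued_Union_chain[OF sv chain] by blast
qed

lemma extension_exists:
  assumes C: "\<And>g l. g \<in> carrier G \<Longrightarrow> l \<in> L \<Longrightarrow> \<bar>\<nu> (commut G g l)\<bar> \<le> C"
  shows "\<exists>\<psi>. partial_extension C L \<psi>"
proof -
  have "defect G N \<nu> \<le> ereal C"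
    by (rule nu.defect_le_commutator_bound) (use C N_subset_L in auto)
  then have "partial_extension C N \<nu>"
    unfolding partial_extension_def defect_le_iff
    using N_subgroup N_subset_L nu.homogeneous nu_conj_invariant by blast
  then have "extension_graphs C \<noteq> {}" using graph_in_extension_graphs by blast
  then obtain R where R: "R \<in> extension_graphs C"
    and maximal: "\<And>S. S \<in> extension_graphs C \<Longrightarrow> R \<subseteq> S \<Longrightarrow> S = R"
    using subset_Zorn_nonempty[of "extension_graphs C"] Union_chain_in_extension_graphs by blast
  then have sv: "single_valued R" and pe: "partial_extension C (Domain R) (graph_fun R)"
    unfolding extension_graphs_def by auto
  have "Domain R = L"
  proof (rule ccontr)
    assume "Domain R \<noteq> L"
    then obtain x where x: "x \<in> L" "x \<notin> Domain R" using pe unfolding partial_extension_def by blast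
    obtain M' \<psi>' where pe': "partial_extension C M' \<psi>'" and "Domain R \<subseteq> M'" "x \<in> M'"
      and agree: "\<forall>y\<in>Domain R. \<psi>' y = graph_fun R y"
      using partial_extension_extend[OF C pe x(1)] by blast
    moreover have "R \<subseteq> (\<lambda>y. (y, \<psi>' y)) ` M'"
      using calculation graph_fun_eq[OF sv] by (force simp: image_iff)
    ultimately have "(\<lambda>y. (y, \<psi>' y)) ` M' = R" using maximal graph_in_extension_graphs by blast
    then show False using x \<open>x \<in> M'\<close> by blast
  qed
  then show ?thesis using pe by blast
qed

lemma extendable_if_Dt_one_finite:
  assumes "Dt G L 1 \<nu> < \<infinity>"
  shows "\<exists>\<psi>. hqm_inv G L \<psi> \<and> (\<forall>x\<in>N. \<psi> x = \<nu> x)"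
proof -
  obtain \<psi> where pe: "partial_extension (real_of_ereal (Dt G L 1 \<nu>)) L \<psi>"
    using extension_exists[OF commut_bound_if_Dt_one_finite[OF assms]] by blast
  interpret psi: homogeneous_quasimorphism_on G L \<psi> "real_of_ereal (Dt G L 1 \<nu>)"
    by (rule homogeneous_quasimorphism_on_if_partial_extension[OF pe])
  have "hqm_inv G L \<psi>" using pe unfolding partial_extension_def by (intro psi.hqm_invI) blast
  then show ?thesis using pe unfolding partial_extension_def by blast
qed

end

theorem theorem8p9:
  fixes G (structure) and L N :: "'a set" and \<nu> :: "'a \<Rightarrow> real"
  assumes "group G"
    and "L \<lhd> G" and "N \<lhd> G"
    and "N \<subseteq> L"
    and "\<forall>g\<in>carrier G. \<forall>l\<in>L. commut G g l \<in> N"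
    and "hqm_inv G N \<nu>"
  shows "((\<exists>\<psi>. hqm_inv G L \<psi> \<and> (\<forall>x\<in>N. \<psi> x = \<nu> x)) \<longleftrightarrow>
            (\<forall>t\<ge>1. Dt G L t \<nu> < \<infinity>))
       \<and> ((\<forall>t\<ge>1. Dt G L t \<nu> < \<infinity>) \<longleftrightarrow> (\<exists>t\<ge>1. Dt G L t \<nu> < \<infinity>))
       \<and> ((\<exists>t\<ge>1. Dt G L t \<nu> < \<infinity>) \<longleftrightarrow> Dt G L 1 \<nu> = defect G N \<nu>)
       \<and> (Dt G L 1 \<nu> = defect G N \<nu> \<longleftrightarrow> Dt G L 1 \<nu> < \<infinity>)"
proof -
  interpret quasimorphism_extension_setting G L N \<nu>
    by (rule quasimorphism_extension_setting.intro[OF assms(1) quasimorphism_extension_setting_axioms.intro])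
      (use assms in auto)
  have extendable_Dt: "\<exists>\<psi>. hqm_inv G L \<psi> \<and> (\<forall>x\<in>N. \<psi> x = \<nu> x) \<Longrightarrow> \<forall>t\<ge>1. Dt G L t \<nu> < \<infinity>"
    using Dt_finite_if_extendable by blast
  have Dt_one: "\<exists>t\<ge>1. Dt G L t \<nu> < \<infinity> \<Longrightarrow> Dt G L 1 \<nu> < \<infinity>"
    using Dt_one_le_Dt[OF L_subgroup] order_le_less_trans by blast
  have Dt_one_defect: "Dt G L 1 \<nu> < \<infinity> \<Longrightarrow> Dt G L 1 \<nu> = defect G N \<nu>"
    using Dt_one_le_defect defect_le_Dt_one by (blast intro: antisym)
  show ?thesis
    using extendable_Dt Dt_one Dt_one_defect defect_N_finite extendable_if_Dt_one_finite
    by (metis order_refl)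
qed

end
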